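(* Let $1\le k\le n-1$ and $I,J\in V_{k,n}$. For $i\in\mathbb{Z}$ let $I^{+i}$ denote the image of $I$ under $x\mapsto x+i$ with values taken modulo $n$ in $\{1,\dots,n\}$ (re-sorted to an increasing vector). Then: (1) if $I$ and $J$ are weakly separated, then they are noncrossing; (2) if $I^{+i}$ and $J^{+i}$ are noncrossing for every $i\in[n]$, then $I$ and $J$ are weakly separated. Consequently the weak separation complex $\Delta^{Sep}_{k,n}$ equals the intersection over $i\in[n]$ of the images of $\Delta^{NC}_{k,n}$ under the cyclic shift by $i$.
   Context: $V_{k,n}$ denotes the set of integer vectors $I=(i_1,\dots,i_k)$ with $1\le i_1<\dots<i_k\le n$, identified with $k$-subsets of $[n]$. Two arcs $(p<p')$, $(q<q')$ cross if $p<q<p'<q'$ or $q<p<q'<p'$. $I,J\in V_{k,n}$ are noncrossing if for all $1\le a<b\le k$ with $i_\ell=j_\ell$ for all $a<\ell<b$, the arcs $(i_a<i_b)$ and $(j_a<j_b)$ do not cross. $\Delta^{NC}_{k,n}$ is the flag simplicial complex on $V_{k,n}$ whose faces are the sets of pairwise noncrossing vectors. $I,J\in V_{k,n}$ are weakly separated if, placing $1,\dots,n$ as the vertices of a convex $n$-gon in cyclic order, the convex hulls of $I\setminus J$ and $J\setminus I$ are disjoint. $\Delta^{Sep}_{k,n}$ is the simplicial complex on $V_{k,n}$ whose faces are the sets of pairwise weakly separated vectors. *)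

theory Defs
  imports "HOL-Analysis.Analysis"
begin

text \<open>V_{k,n}: k-subsets of [n] = {1..n}; the increasing vector of I is
  sorted_list_of_set I (0-indexed).\<close>
definition Vkn :: "nat \<Rightarrow> nat \<Rightarrow> nat set set" where
  "Vkn k n = {I. I \<subseteq> {1..n} \<and> card I = k}"

definition arcs_cross :: "nat \<Rightarrow> nat \<Rightarrow> nat \<Rightarrow> nat \<Rightarrow> bool" where
  "arcs_cross p p' q q' \<longleftrightarrow> (p < q \<and> q < p' \<and> p' < q') \<or> (q < p \<and> p < q' \<and> q' < p')"

definition noncrossing :: "nat \<Rightarrow> nat set \<Rightarrow> nat set \<Rightarrow> bool" where
  "noncrossing k I J \<longleftrightarrow>
     (let i = sorted_list_of_set I; j = sorted_list_of_set J in
      \<forall>a b. a < b \<and> b < k \<and> (\<forall>l. a < l \<and> l < b \<longrightarrow> i ! l = j ! l)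
        \<longrightarrow> \<not> arcs_cross (i ! a) (i ! b) (j ! a) (j ! b))"

definition polyvert :: "nat \<Rightarrow> nat \<Rightarrow> complex" where
  "polyvert n m = cis (2 * pi * real m / real n)"

definition weakly_separated :: "nat \<Rightarrow> nat set \<Rightarrow> nat set \<Rightarrow> bool" where
  "weakly_separated n I J \<longleftrightarrow>
     convex hull (polyvert n ` (I - J)) \<inter> convex hull (polyvert n ` (J - I)) = {}"

definition cshift :: "nat \<Rightarrow> int \<Rightarrow> nat set \<Rightarrow> nat set" where
  "cshift n i I = (\<lambda>x. nat ((int x + i - 1) mod int n) + 1) ` I"

definition DeltaNC :: "nat \<Rightarrow> nat \<Rightarrow> nat set set set" where
  "DeltaNC k n = {F. F \<subseteq> Vkn k n \<and> (\<forall>I\<in>F. \<forall>J\<in>F. noncrossing k I J)}"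

definition DeltaSep :: "nat \<Rightarrow> nat \<Rightarrow> nat set set set" where
  "DeltaSep k n = {F. F \<subseteq> Vkn k n \<and> (\<forall>I\<in>F. \<forall>J\<in>F. weakly_separated n I J)}"

definition shift_complex :: "nat \<Rightarrow> int \<Rightarrow> nat set set set \<Rightarrow> nat set set set" where
  "shift_complex n i D = (\<lambda>F. cshift n i ` F) ` D"

end

theory Submission
  imports Defs
begin

text \<open>Both directions go through a combinatorial form of weak separation: I and J are weakly
  separated iff neither of I - J, J - I interlaces the other, i.e. there are no a < b < c < d
  alternating between them. Interlacing vertices give crossing chords of the n-gon; otherwise one of
  the differences lies in an arc of the polygon, which a line separates from the remaining vertices.

  A crossing pair of arcs (i_a, i_b), (j_a, j_b) whose vectors agree strictly between a and b forces
  such an alternation. Conversely, an alternation y < x < y' < x' with y, y' in J - I and x, x' in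
  I - J yields two pairs j < i of consecutive elements of the symmetric difference, j in J - I and
  i in I - J. Such a pair makes I and J cross as soon as I has exactly one element more than J
  below j. The excess t \<mapsto> #{x \<in> I. x < t} - #{x \<in> J. x < t} vanishes at 1 and n + 1, changes by at
  most one per step and drops at each element of J - I; a discrete intermediate value argument
  therefore finds a point u outside (j, i] for one of the two pairs where the excess is one less
  than at j. Shifting the vectors cyclically so that they start at u produces the crossing.\<close>

section \<open>Chords of the regular n-gon\<close>

definition orient :: "complex \<Rightarrow> complex \<Rightarrow> complex \<Rightarrow> real" where
  "orient X Y Z = Im (cnj (Y - X) * (Z - X))"

lemma orient_lines_meet:
  "(orient R S P - orient R S Q) *\<^sub>R P + orient R S P *\<^sub>R (Q - P)
     = (orient R S P - orient R S Q) *\<^sub>R R - orient P Q R *\<^sub>R (S - R)"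
  by (simp add: complex_eq_iff orient_def algebra_simps)

lemma closed_segments_intersect:
  assumes "orient R S P > 0" "orient R S Q < 0" "orient P Q R < 0" "orient P Q S > 0"
  shows "closed_segment P Q \<inter> closed_segment R S \<noteq> {}"
proof -
  define D where "D = orient R S P - orient R S Q"
  \<comment> \<open>P, Q lie at signed distances proportional to orient R S P, orient R S Q from the line RS.\<close>
  define t where "t = orient R S P / D"
  define u where "u = - orient P Q R / D"
  have D: "D > 0" using assms unfolding D_def by simp
  have "orient P Q R - orient P Q S = - D"
    unfolding D_def orient_def by (simp add: algebra_simps)
  then have t: "0 \<le> t" "t \<le> 1" and u: "0 \<le> u" "u \<le> 1"
    using assms D unfolding t_def u_def D_def by (auto simp: field_simps)
  have "D *\<^sub>R (P + t *\<^sub>R (Q - P)) = D *\<^sub>R P + orient R S P *\<^sub>R (Q - P)"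
    "D *\<^sub>R (R + u *\<^sub>R (S - R)) = D *\<^sub>R R - orient P Q R *\<^sub>R (S - R)"
    using D by (simp_all add: t_def u_def scaleR_add_right scaleR_diff_right)
  then have "D *\<^sub>R (P + t *\<^sub>R (Q - P)) = D *\<^sub>R (R + u *\<^sub>R (S - R))"
    using orient_lines_meet[of R S P Q] unfolding D_def by simp
  then have "P + t *\<^sub>R (Q - P) = R + u *\<^sub>R (S - R)"
    using D by (metis less_irrefl scaleR_cancel_left)
  then have "(1 - t) *\<^sub>R P + t *\<^sub>R Q = (1 - u) *\<^sub>R R + u *\<^sub>R S"
    by (simp add: algebra_simps)
  then have "(1 - t) *\<^sub>R P + t *\<^sub>R Q \<in> closed_segment P Q \<inter> closed_segment R S"
    using t u by (auto simp: in_segment)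
  then show ?thesis by blast
qed

lemma cis_diff: "cis y - cis x = 2 * \<i> * complex_of_real (sin ((y - x) / 2)) * cis ((x + y) / 2)"
proof -
  define m where "m = (x + y) / 2"
  define e where "e = (y - x) / 2"
  have y: "y = m + e" and x: "x = m - e" unfolding m_def e_def by (simp_all add: field_simps)
  show ?thesis unfolding y x
    by (rule complex_eqI) (simp_all add: cos_add cos_diff sin_add sin_diff algebra_simps)
qed

lemma orient_cis:
  "orient (cis x) (cis y) (cis z) = 4 * sin ((y - x) / 2) * sin ((z - x) / 2) * sin ((z - y) / 2)"
proof -
  have "cnj (cis y - cis x) * (cis z - cis x)
      = 4 * complex_of_real (sin ((y - x) / 2) * sin ((z - x) / 2))
          * (cnj (cis ((x + y) / 2)) * cis ((x + z) / 2))"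
    unfolding cis_diff by (simp add: algebra_simps)
  also have "cnj (cis ((x + y) / 2)) * cis ((x + z) / 2) = cis ((x + z) / 2 - (x + y) / 2)"
    by (simp add: cis_cnj cis_mult)
  also have "(x + z) / 2 - (x + y) / 2 = (z - y) / 2" by (simp add: field_simps)
  finally show ?thesis unfolding orient_def by simp
qed

lemma orient_polyvert:
  "orient (polyvert n x) (polyvert n y) (polyvert n z)
     = 4 * sin (pi * (real y - real x) / real n) * sin (pi * (real z - real x) / real n)
         * sin (pi * (real z - real y) / real n)"
proof -
  have "(2 * pi * real b / real n - 2 * pi * real a / real n) / 2 = pi * (real b - real a) / real n"
    for a b by (simp add: right_diff_distrib diff_divide_distrib)
  then show ?thesis unfolding polyvert_def orient_cis by presburger
qed

lemma sin_chord_signs: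
  assumes "1 \<le> x" "x < y" "y \<le> n"
  shows "sin (pi * (real y - real x) / real n) > 0" "sin (pi * (real x - real y) / real n) < 0"
proof -
  have "0 < real y - real x" "real y - real x < real n" "0 < real n" using assms by auto
  then have "sin (pi * (real y - real x) / real n) > 0"
    by (intro sin_gt_zero) (simp_all add: pos_divide_less_eq)
  moreover have "pi * (real x - real y) / real n = - (pi * (real y - real x) / real n)"
    by (simp add: right_diff_distrib diff_divide_distrib)
  ultimately show "sin (pi * (real y - real x) / real n) > 0"
    "sin (pi * (real x - real y) / real n) < 0" by simp_all
qed

lemma polyvert_chords_intersect:
  assumes "1 \<le> a" "a < b" "b < c" "c < d" "d \<le> n"
  shows "closed_segment (polyvert n a) (polyvert n c) \<inter> closed_segment (polyvert n b) (polyvert n d) \<noteq> {}"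
proof (rule closed_segments_intersect)
  define s where "s x y = sin (pi * (real y - real x) / real n)" for x y :: nat
  have "s a b > 0" "s a c > 0" "s a d > 0" "s b c > 0" "s b d > 0" "s c d > 0"
    "s b a < 0" "s c b < 0" "s d a < 0" "s d c < 0"
    unfolding s_def using assms by (auto intro!: sin_chord_signs)
  then show "orient (polyvert n b) (polyvert n d) (polyvert n a) > 0"
    "orient (polyvert n b) (polyvert n d) (polyvert n c) < 0"
    "orient (polyvert n a) (polyvert n c) (polyvert n b) < 0"
    "orient (polyvert n a) (polyvert n c) (polyvert n d) > 0"
    unfolding orient_polyvert s_def[symmetric] by (simp_all add: zero_less_mult_iff mult_less_0_iff)
qed

lemma cos_less_cos_within_period:
  assumes "0 \<le> h" "h < \<bar>t\<bar>" "\<bar>t\<bar> < 2 * pi - h"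
  shows "cos t < cos h"
proof (cases "\<bar>t\<bar> \<le> pi")
  case True
  then show ?thesis using cos_monotone_0_pi[of h "\<bar>t\<bar>"] assms by simp
next
  case False
  have "cos t = cos (2 * pi - \<bar>t\<bar>)" by (simp add: cos_diff)
  then show ?thesis using cos_monotone_0_pi[of h "2 * pi - \<bar>t\<bar>"] assms False by simp
qed

lemma convex_hull_polyvert_arc_disjoint:
  assumes pq: "1 \<le> p" "p \<le> q" "q \<le> n"
    and A: "A \<subseteq> {p..q}" and B: "B \<subseteq> {1..n} - {p..q}"
  shows "convex hull (polyvert n ` A) \<inter> convex hull (polyvert n ` B) = {}"
proof -
  \<comment> \<open>Separate by the half-plane cut off by the chord from vertex p to vertex q.\<close>
  define K where "K = pi / real n"
  have K: "K > 0" using pq by (simp add: K_def)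
  define h where "h = K * (real q - real p)"
  define w where "w = cis (K * (real p + real q))"
  have inner_w: "inner w (polyvert n x) = cos (K * (2 * real x - real p - real q))" for x
  proof -
    have "inner w (polyvert n x) = cos (2 * pi * real x / real n - K * (real p + real q))"
      unfolding w_def polyvert_def inner_complex_def by (simp add: cos_diff)
    also have "2 * pi * real x / real n - K * (real p + real q) = K * (2 * real x - real p - real q)"
      using pq unfolding K_def by (simp add: field_simps)
    finally show ?thesis .
  qed
  have "h \<le> K * real n" unfolding h_def using K pq by (intro mult_left_mono) auto
  moreover have "K * real n = pi" using pq by (simp add: K_def)
  ultimately have h: "0 \<le> h" "h \<le> pi" using K pq by (auto simp: h_def)
  have inA: "cos h \<le> inner w (polyvert n x)" if "x \<in> {p..q}" for x
  proof -
    have "\<bar>K * (2 * real x - real p - real q)\<bar> \<le> h"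
      using that K unfolding h_def abs_mult by (auto intro!: mult_left_mono)
    then show ?thesis
      unfolding inner_w using cos_monotone_0_pi_le[of "\<bar>K * (2 * real x - real p - real q)\<bar>" h] h
      by simp
  qed
  have inB: "inner w (polyvert n x) < cos h" if "x \<in> {1..n} - {p..q}" for x
  proof -
    have "real q - real p < \<bar>2 * real x - real p - real q\<bar>"
      "\<bar>2 * real x - real p - real q\<bar> < 2 * real n - (real q - real p)"
      using that pq by auto
    then have "h < \<bar>K * (2 * real x - real p - real q)\<bar>"
      "\<bar>K * (2 * real x - real p - real q)\<bar> < K * (2 * real n - (real q - real p))"
      using K unfolding h_def abs_mult by simp_all
    moreover have "K * (2 * real n - (real q - real p)) = 2 * pi - h"
      using pq unfolding h_def K_def by (simp add: field_simps)
    ultimately show ?thesis unfolding inner_w using cos_less_cos_within_period h by simp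
  qed
  have "convex hull (polyvert n ` A) \<subseteq> {z. inner w z \<ge> cos h}"
    by (rule hull_minimal) (use A inA in \<open>auto simp: convex_halfspace_ge\<close>)
  moreover have "convex hull (polyvert n ` B) \<subseteq> {z. inner w z < cos h}"
    by (rule hull_minimal) (use B inB in \<open>auto simp: convex_halfspace_lt\<close>)
  ultimately show ?thesis by fastforce
qed

definition interlaced :: "nat set \<Rightarrow> nat set \<Rightarrow> bool" where
  "interlaced A B \<longleftrightarrow> (\<exists>a b c d. a < b \<and> b < c \<and> c < d \<and> a \<in> A \<and> b \<in> B \<and> c \<in> A \<and> d \<in> B)"

lemma interlaced_convex_hulls_meet:
  assumes "interlaced A B" "A \<subseteq> {1..n}" "B \<subseteq> {1..n}"
  shows "convex hull (polyvert n ` A) \<inter> convex hull (polyvert n ` B) \<noteq> {}"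
proof -
  obtain a b c d where abcd: "a < b" "b < c" "c < d" "a \<in> A" "b \<in> B" "c \<in> A" "d \<in> B"
    using assms(1) unfolding interlaced_def by blast
  then have "closed_segment (polyvert n a) (polyvert n c) \<inter> closed_segment (polyvert n b) (polyvert n d) \<noteq> {}"
    using assms by (intro polyvert_chords_intersect) auto
  moreover have "closed_segment (polyvert n a) (polyvert n c) \<subseteq> convex hull (polyvert n ` A)"
    "closed_segment (polyvert n b) (polyvert n d) \<subseteq> convex hull (polyvert n ` B)"
    unfolding segment_convex_hull using abcd by (auto intro!: hull_mono)
  ultimately show ?thesis by blast
qed

lemma not_interlaced_imp_arc_split:
  assumes AB: "A \<subseteq> {1..n}" "B \<subseteq> {1..n}" "A \<inter> B = {}" "A \<noteq> {}"
    and not_AB: "\<not> interlaced A B" and not_BA: "\<not> interlaced B A"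
  shows "\<exists>p q. 1 \<le> p \<and> p \<le> q \<and> q \<le> n \<and>
    (A \<subseteq> {p..q} \<and> B \<subseteq> {1..n} - {p..q} \<or> B \<subseteq> {p..q} \<and> A \<subseteq> {1..n} - {p..q})"
proof -
  have arc: "\<exists>p q. 1 \<le> p \<and> p \<le> q \<and> q \<le> n \<and> X \<subseteq> {p..q} \<and> Y \<subseteq> {1..n} - {p..q}"
    if "X \<subseteq> {1..n}" "Y \<subseteq> {1..n}" "X \<noteq> {}" "Y \<inter> {Min X..Max X} = {}" for X Y
  proof -
    have "finite X" using that(1) finite_subset by blast
    then have "Min X \<in> X" "Max X \<in> X" "X \<subseteq> {Min X..Max X}" using that(3) by auto
    then show ?thesis using that by (intro exI[of _ "Min X"] exI[of _ "Max X"]) auto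
  qed
  show ?thesis
  proof (cases "B \<inter> {Min A..Max A} = {}")
    case True
    then show ?thesis using arc[OF AB(1,2,4)] by blast
  next
    case False
    have fin: "finite A" "finite B" using AB(1,2) finite_subset by blast+
    have Aext: "Min A \<in> A" "Max A \<in> A" using fin AB(4) by simp_all
    obtain b where "b \<in> B" "Min A \<le> b" "b \<le> Max A" using False by auto
    moreover have "b \<noteq> Min A" "b \<noteq> Max A" using calculation(1) Aext AB(3) by auto
    ultimately have b: "b \<in> B" "Min A < b" "b < Max A" by simp_all
    have "B \<subseteq> {Min A<..<Max A}"
    proof
      fix x assume x: "x \<in> B"
      have "\<not> Max A < x"
        using not_AB Aext b x unfolding interlaced_def by blast
      moreover have "\<not> x < Min A"
        using not_BA Aext b x unfolding interlaced_def by blast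
      moreover have "x \<noteq> Min A" "x \<noteq> Max A" using x Aext AB(3) by auto
      ultimately show "x \<in> {Min A<..<Max A}" by simp
    qed
    moreover have Bext: "Min B \<in> B" "Max B \<in> B" using Min_in[OF fin(2)] Max_in[OF fin(2)] b(1) by auto
    ultimately have "Max B < Max A" by auto
    have "A \<inter> {Min B..Max B} = {}"
    proof (rule ccontr)
      assume "A \<inter> {Min B..Max B} \<noteq> {}"
      then obtain a where "a \<in> A" "Min B \<le> a" "a \<le> Max B" by auto
      moreover have "a \<noteq> Min B" "a \<noteq> Max B" using calculation(1) Bext AB(3) by auto
      ultimately have "interlaced B A"
        unfolding interlaced_def using Bext Aext \<open>Max B < Max A\<close>
        by (intro exI[of _ "Min B"] exI[of _ a] exI[of _ "Max B"] exI[of _ "Max A"]) auto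
      then show False using not_BA by simp
    qed
    then show ?thesis using arc[OF AB(2,1)] b by blast
  qed
qed

lemma weakly_separated_iff_not_interlaced:
  assumes "I \<subseteq> {1..n}" "J \<subseteq> {1..n}"
  shows "weakly_separated n I J \<longleftrightarrow> \<not> interlaced (I - J) (J - I) \<and> \<not> interlaced (J - I) (I - J)"
proof
  assume "weakly_separated n I J"
  then show "\<not> interlaced (I - J) (J - I) \<and> \<not> interlaced (J - I) (I - J)"
    using interlaced_convex_hulls_meet[of "I - J" "J - I" n] interlaced_convex_hulls_meet[of "J - I" "I - J" n]
      assms unfolding weakly_separated_def by blast
next
  assume not_interlaced: "\<not> interlaced (I - J) (J - I) \<and> \<not> interlaced (J - I) (I - J)"
  show "weakly_separated n I J"
  proof (cases "I - J = {}")
    case False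
    then obtain p q where "1 \<le> p" "p \<le> q" "q \<le> n"
      "I - J \<subseteq> {p..q} \<and> J - I \<subseteq> {1..n} - {p..q} \<or> J - I \<subseteq> {p..q} \<and> I - J \<subseteq> {1..n} - {p..q}"
      using not_interlaced_imp_arc_split[of "I - J" n "J - I"] not_interlaced assms by blast
    then show ?thesis
      unfolding weakly_separated_def using convex_hull_polyvert_arc_disjoint by blast
  next
    case True
    then show ?thesis
      unfolding weakly_separated_def by (simp only: image_empty convex_hull_empty Int_empty_left)
  qed
qed

section \<open>Ranks in sorted lists\<close>

definition count_below :: "nat set \<Rightarrow> nat \<Rightarrow> nat" where
  "count_below S x = card {y \<in> S. y < x}"

lemma sorted_list_of_set_nth_mem:
  "finite S \<Longrightarrow> l < card S \<Longrightarrow> sorted_list_of_set S ! l \<in> S"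
  by (metis length_sorted_list_of_set nth_mem set_sorted_list_of_set)

lemma sorted_list_of_set_nth_less_iff:
  assumes "finite S" "l < card S" "l' < card S"
  shows "sorted_list_of_set S ! l < sorted_list_of_set S ! l' \<longleftrightarrow> l < l'"
  using sorted_wrt_nth_less[OF strict_sorted_list_of_set[of S]] assms
  by (metis length_sorted_list_of_set less_asym linorder_neqE_nat)

lemma count_below_sorted_list_of_set_nth:
  assumes "finite S" "l < card S"
  shows "count_below S (sorted_list_of_set S ! l) = l"
proof -
  let ?xs = "sorted_list_of_set S"
  have "{y \<in> S. y < ?xs ! l} = (\<lambda>j. ?xs ! j) ` {..<l}"
  proof (intro set_eqI iffI)
    fix y assume "y \<in> {y \<in> S. y < ?xs ! l}"
    then obtain j where "j < card S" "y = ?xs ! j" "?xs ! j < ?xs ! l"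
      using assms(1) by (metis (no_types, lifting) in_set_conv_nth length_sorted_list_of_set
          mem_Collect_eq set_sorted_list_of_set)
    then show "y \<in> (\<lambda>j. ?xs ! j) ` {..<l}"
      using sorted_list_of_set_nth_less_iff[OF assms(1)] assms(2) by auto
  next
    fix y assume "y \<in> (\<lambda>j. ?xs ! j) ` {..<l}"
    then obtain j where "j < l" "y = ?xs ! j" by blast
    then show "y \<in> {y \<in> S. y < ?xs ! l}"
      using assms sorted_list_of_set_nth_mem[OF assms(1)] sorted_list_of_set_nth_less_iff[OF assms(1)]
      by auto
  qed
  moreover have "inj_on (\<lambda>j. ?xs ! j) {..<l}"
    using assms by (intro inj_onI) (simp add: nth_eq_iff_index_eq)
  ultimately show ?thesis unfolding count_below_def by (simp add: card_image)
qed

lemma sorted_list_of_set_nth_count_below: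
  assumes "finite S" "x \<in> S"
  shows "count_below S x < card S" "sorted_list_of_set S ! count_below S x = x"
proof -
  obtain l where "l < card S" "x = sorted_list_of_set S ! l"
    using assms by (metis in_set_conv_nth length_sorted_list_of_set set_sorted_list_of_set)
  then show "count_below S x < card S" "sorted_list_of_set S ! count_below S x = x"
    using count_below_sorted_list_of_set_nth[OF assms(1)] by auto
qed

lemma count_below_mono: "x \<le> y \<Longrightarrow> finite S \<Longrightarrow> count_below S x \<le> count_below S y"
  unfolding count_below_def by (rule card_mono) auto

lemma count_below_strict_mono:
  assumes "finite S" "x \<in> S" "x < y"
  shows "count_below S x < count_below S y"
  unfolding count_below_def using assms by (intro psubset_card_mono) auto

lemma count_below_split:
  assumes "finite S" "j < x"
  shows "count_below S x = count_below S j + (if j \<in> S then 1 else 0) + card {y \<in> S. j < y \<and> y < x}"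
proof -
  have "{y \<in> S. y < x} = {y \<in> S. y < j} \<union> ({y \<in> S. y = j} \<union> {y \<in> S. j < y \<and> y < x})"
    using assms by auto
  then have "count_below S x = count_below S j + (card {y \<in> S. y = j} + card {y \<in> S. j < y \<and> y < x})"
    unfolding count_below_def using assms(1) by (simp add: card_Un_disjoint disjoint_iff)
  moreover have "{y \<in> S. y = j} = (if j \<in> S then {j} else {})" by auto
  ultimately show ?thesis by simp
qed

lemma count_below_Suc: "finite S \<Longrightarrow> count_below S (Suc x) = count_below S x + (if x \<in> S then 1 else 0)"
  using count_below_split[of S x "Suc x"] by simp

lemma card_above:
  assumes "finite S"
  shows "card {y \<in> S. x < y} = card S - count_below S x - (if x \<in> S then 1 else 0)"
proof -
  have "S = {y \<in> S. y < Suc x} \<union> {y \<in> S. x < y}" by auto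
  then have "card S = count_below S (Suc x) + card {y \<in> S. x < y}"
    unfolding count_below_def using assms by (metis (no_types, lifting) card_Un_disjoint
      disjoint_iff finite_Un mem_Collect_eq not_less_eq)
  then show ?thesis using count_below_Suc[OF assms] by simp
qed

section \<open>Weak separation implies noncrossing\<close>

lemma noncrossing_iff:
  "noncrossing k I J \<longleftrightarrow> (\<forall>a b. a < b \<and> b < k \<and>
     (\<forall>l. a < l \<and> l < b \<longrightarrow> sorted_list_of_set I ! l = sorted_list_of_set J ! l)
     \<longrightarrow> \<not> arcs_cross (sorted_list_of_set I ! a) (sorted_list_of_set I ! b)
                       (sorted_list_of_set J ! a) (sorted_list_of_set J ! b))"
  unfolding noncrossing_def Let_def by simp

lemma arcs_cross_commute: "arcs_cross p p' q q' \<longleftrightarrow> arcs_cross q q' p p'"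
  unfolding arcs_cross_def by blast

lemma noncrossing_commute: "noncrossing k I J \<longleftrightarrow> noncrossing k J I"
  unfolding noncrossing_iff by (metis arcs_cross_commute)

lemma agreeing_stretch_mem:
  fixes I J :: "nat set"
  defines "i \<equiv> sorted_list_of_set I" and "j \<equiv> sorted_list_of_set J"
  assumes fin: "finite I" "finite J" and card: "card I = k" "card J = k"
    and "a < b" "b < k" and between: "\<forall>l. a < l \<and> l < b \<longrightarrow> i ! l = j ! l"
    and x: "x \<in> I" "i ! a < x" "x < i ! b"
  shows "x \<in> J" "count_below J x = count_below I x"
proof -
  define r where "r = count_below I x"
  have "i ! r = x" using sorted_list_of_set_nth_count_below[OF fin(1) x(1)] by (simp add: r_def i_def)
  moreover have "a < r" "r < b"
    using sorted_list_of_set_nth_count_below(1)[OF fin(1) x(1)] sorted_list_of_set_nth_less_iff[OF fin(1)]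
      x \<open>a < b\<close> \<open>b < k\<close> card \<open>i ! r = x\<close> unfolding i_def r_def by (metis order.strict_trans)+
  ultimately have "j ! r = x" using between by simp
  moreover have "r < card J" using \<open>r < b\<close> \<open>b < k\<close> card by simp
  ultimately show "x \<in> J" "count_below J x = count_below I x"
    using sorted_list_of_set_nth_mem[OF fin(2)] count_below_sorted_list_of_set_nth[OF fin(2)]
    unfolding j_def r_def by metis+
qed

lemma crossing_imp_interlaced:
  fixes I J :: "nat set"
  defines "i \<equiv> sorted_list_of_set I" and "j \<equiv> sorted_list_of_set J"
  assumes fin: "finite I" "finite J" and card: "card I = k" "card J = k"
    and ab: "a < b" "b < k" and between: "\<forall>l. a < l \<and> l < b \<longrightarrow> i ! l = j ! l"
    and cross: "i ! a < j ! a" "j ! a < i ! b" "i ! b < j ! b"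
  shows "interlaced (I - J) (J - I)"
proof -
  have count_i: "count_below I (i ! a) = a" "count_below I (i ! b) = b"
    using count_below_sorted_list_of_set_nth[OF fin(1)] ab card by (simp_all add: i_def)
  have count_j: "count_below J (j ! a) = a" "count_below J (j ! b) = b"
    using count_below_sorted_list_of_set_nth[OF fin(2)] ab card by (simp_all add: j_def)
  have mem: "i ! a \<in> I" "i ! b \<in> I" "j ! a \<in> J" "j ! b \<in> J"
    using sorted_list_of_set_nth_mem[OF fin(1)] sorted_list_of_set_nth_mem[OF fin(2)] ab card
    unfolding i_def j_def by simp_all
  have "j ! a \<notin> I"
  proof
    assume "j ! a \<in> I"
    then have "count_below J (j ! a) = count_below I (j ! a)"
      using agreeing_stretch_mem(2)[OF fin card ab between[unfolded i_def j_def]] cross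
      unfolding i_def j_def by blast
    moreover have "count_below I (i ! a) < count_below I (j ! a)"
      using count_below_strict_mono[OF fin(1) mem(1) cross(1)] .
    ultimately show False using count_i count_j by simp
  qed
  have "i ! b \<notin> J"
  proof
    assume "i ! b \<in> J"
    then have "count_below I (i ! b) = count_below J (i ! b)"
      using agreeing_stretch_mem(2)[OF fin(2,1) card(2,1) ab] between[unfolded i_def j_def] cross
      unfolding i_def j_def by (metis (no_types, lifting))
    moreover have "count_below J (i ! b) < count_below J (j ! b)"
      using count_below_strict_mono[OF fin(2) \<open>i ! b \<in> J\<close> cross(3)] .
    ultimately show False using count_i count_j by simp
  qed
  \<comment> \<open>I has more than a elements below j!a, J exactly a; symmetrically above i!b.\<close>
  have "\<exists>x \<in> I - J. x < j ! a"
  proof (rule ccontr)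
    assume "\<not> ?thesis"
    then have "count_below I (j ! a) \<le> count_below J (j ! a)"
      unfolding count_below_def using fin by (intro card_mono) auto
    moreover have "a < count_below I (j ! a)"
      using count_below_strict_mono[OF fin(1) mem(1) cross(1)] count_i by simp
    ultimately show False using count_j by simp
  qed
  moreover have "\<exists>y \<in> J - I. i ! b < y"
  proof (rule ccontr)
    assume "\<not> ?thesis"
    then have "card {y \<in> J. i ! b < y} \<le> card {y \<in> I. i ! b < y}"
      using fin by (intro card_mono) auto
    moreover have "count_below J (i ! b) \<le> b"
      using count_below_mono[OF less_imp_le[OF cross(3)] fin(2)] count_j by simp
    ultimately show False
      using card_above[OF fin(1), of "i ! b"] card_above[OF fin(2), of "i ! b"]
        mem \<open>i ! b \<notin> J\<close> count_i card ab by simp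
  qed
  ultimately show ?thesis
    unfolding interlaced_def using mem \<open>j ! a \<notin> I\<close> \<open>i ! b \<notin> J\<close> cross(2) by blast
qed

lemma weakly_separated_imp_noncrossing:
  assumes "I \<in> Vkn k n" "J \<in> Vkn k n" "weakly_separated n I J"
  shows "noncrossing k I J"
proof (rule ccontr)
  have fin: "finite I" "finite J" and card: "card I = k" "card J = k"
    using assms(1,2) finite_subset[of _ "{1..n}"] by (auto simp: Vkn_def)
  assume "\<not> noncrossing k I J"
  then obtain a b where ab: "a < b" "b < k"
    and between: "\<forall>l. a < l \<and> l < b \<longrightarrow> sorted_list_of_set I ! l = sorted_list_of_set J ! l"
    and "arcs_cross (sorted_list_of_set I ! a) (sorted_list_of_set I ! b)
                    (sorted_list_of_set J ! a) (sorted_list_of_set J ! b)"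
    unfolding noncrossing_iff by blast
  then have "interlaced (I - J) (J - I) \<or> interlaced (J - I) (I - J)"
    unfolding arcs_cross_def
    using crossing_imp_interlaced[OF fin card ab] crossing_imp_interlaced[OF fin(2,1) card(2,1) ab]
    by (metis (no_types, lifting))
  then show False
    using assms weakly_separated_iff_not_interlaced by (auto simp: Vkn_def)
qed

section \<open>Noncrossing after every cyclic shift implies weak separation\<close>

definition adjacent_pair :: "nat set \<Rightarrow> nat set \<Rightarrow> nat \<Rightarrow> nat \<Rightarrow> bool" where
  "adjacent_pair I J j i \<longleftrightarrow>
     j \<in> J - I \<and> i \<in> I - J \<and> j < i \<and> (\<forall>z. j < z \<and> z < i \<longrightarrow> (z \<in> I \<longleftrightarrow> z \<in> J))"

lemma adjacent_pair_between:
  assumes fin: "finite I" "finite J" and "y \<in> J - I" "x \<in> I - J" "y < x"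
  obtains j i where "y \<le> j" "i \<le> x" "adjacent_pair I J j i"
proof -
  define Y where "Y = {z \<in> J - I. z < x}"
  have Y: "finite Y" "y \<in> Y" using fin assms(3,5) unfolding Y_def by auto
  define j where "j = Max Y"
  have "j \<in> Y" unfolding j_def using Max_in[OF Y(1)] Y(2) by blast
  then have j: "j \<in> J - I" "j < x" "y \<le> j" and j_max: "\<And>z. z \<in> J - I \<Longrightarrow> z < x \<Longrightarrow> z \<le> j"
    using Max_ge[OF Y(1)] Y(2) unfolding j_def Y_def by auto
  define X where "X = {z \<in> I - J. j < z}"
  have X: "finite X" "x \<in> X" using fin assms(4) j unfolding X_def by auto
  define i where "i = Min X"
  have "i \<in> X" unfolding i_def using Min_in[OF X(1)] X(2) by blast
  then have i: "i \<in> I - J" "j < i" "i \<le> x" and i_min: "\<And>z. z \<in> I - J \<Longrightarrow> j < z \<Longrightarrow> i \<le> z"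
    using Min_le[OF X(1)] X(2) unfolding i_def X_def by auto
  have "z \<in> I \<longleftrightarrow> z \<in> J" if "j < z" "z < i" for z
    using that i j i_min[of z] j_max[of z] by fastforce
  then show ?thesis using that i j unfolding adjacent_pair_def by blast
qed

lemma adjacent_pair_crossing:
  assumes fin: "finite I" "finite J" and card: "card I = k" "card J = k"
    and adj: "adjacent_pair I J j i" and excess: "count_below I j = count_below J j + 1"
  shows "\<not> noncrossing k I J"
proof -
  let ?i = "sorted_list_of_set I" and ?j = "sorted_list_of_set J"
  have ji: "j \<in> J" "j \<notin> I" "i \<in> I" "i \<notin> J" "j < i"
    and agree: "\<And>z. j < z \<Longrightarrow> z < i \<Longrightarrow> z \<in> I \<longleftrightarrow> z \<in> J"
    using adj unfolding adjacent_pair_def by auto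
  define a where "a = count_below J j"
  define b where "b = count_below I i"
  have j_a: "?j ! a = j" using sorted_list_of_set_nth_count_below[OF fin(2) ji(1)] a_def by simp
  have i_b: "?i ! b = i" using sorted_list_of_set_nth_count_below[OF fin(1) ji(3)] b_def by simp
  have b: "b < k" using sorted_list_of_set_nth_count_below[OF fin(1) ji(3)] b_def card by simp
  have agree_below: "{y \<in> I. j < y \<and> y < x} = {y \<in> J. j < y \<and> y < x}" if "x \<le> i" for x
    using agree that by auto
  have b_eq: "b = a + 1 + card {y \<in> I. j < y \<and> y < i}"
    using count_below_split[OF fin(1) ji(5)] ji excess unfolding a_def b_def by simp
  have count_J_i: "count_below J i = b"
    using count_below_split[OF fin(2) ji(5)] ji agree_below[of i] b_eq unfolding a_def by simp
  have ab: "a < b" using b_eq by simp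
  have "i < ?j ! b"
  proof (rule ccontr)
    assume "\<not> i < ?j ! b"
    moreover have "?j ! b \<in> J" using sorted_list_of_set_nth_mem[OF fin(2)] b card by simp
    ultimately have "count_below J (?j ! b) < count_below J i"
      using ji(4) count_below_strict_mono[OF fin(2)] by (metis linorder_neqE_nat)
    then show False using count_below_sorted_list_of_set_nth[OF fin(2)] b card count_J_i by simp
  qed
  moreover have "?i ! a < j"
  proof (rule ccontr)
    assume "\<not> ?i ! a < j"
    then have "count_below I j \<le> count_below I (?i ! a)" using count_below_mono[OF _ fin(1)] by simp
    then show False using count_below_sorted_list_of_set_nth[OF fin(1)] ab b card excess a_def by simp
  qed
  moreover have "?i ! l = ?j ! l" if l: "a < l" "l < b" for l
  proof -
    define x where "x = ?i ! l"
    have x: "x \<in> I" "count_below I x = l" "x < i"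
      using sorted_list_of_set_nth_mem[OF fin(1)] count_below_sorted_list_of_set_nth[OF fin(1)]
        sorted_list_of_set_nth_less_iff[OF fin(1), of l b] l b card i_b unfolding x_def by simp_all
    have "j < x"
    proof (rule ccontr)
      assume "\<not> j < x"
      then have "count_below I x < count_below I j"
        using x(1) ji(2) count_below_strict_mono[OF fin(1)] by (metis linorder_neqE_nat)
      then show False using x(2) excess l a_def by simp
    qed
    then have "x \<in> J" "count_below I x = count_below J x"
      using agree x count_below_split[OF fin(1) \<open>j < x\<close>] count_below_split[OF fin(2) \<open>j < x\<close>]
        ji excess agree_below[of x] by simp_all
    then have "?j ! l = x" using sorted_list_of_set_nth_count_below(2)[OF fin(2) \<open>x \<in> J\<close>] x(2) by simp
    then show ?thesis unfolding x_def by simp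
  qed
  ultimately have "arcs_cross (?i ! a) (?i ! b) (?j ! a) (?j ! b)"
    unfolding arcs_cross_def j_a i_b using ji by simp
  then show ?thesis unfolding noncrossing_iff using ab b \<open>\<And>l. a < l \<Longrightarrow> l < b \<Longrightarrow> ?i ! l = ?j ! l\<close>
    by blast
qed

definition rotation :: "nat \<Rightarrow> nat \<Rightarrow> nat \<Rightarrow> nat" where
  "rotation n u x = (if u \<le> x then x + 1 - u else x + n + 1 - u)"

lemma rotation_less_iff:
  assumes "x \<in> {1..n}" "y \<in> {1..n}" "u \<le> n"
  shows "rotation n u x < rotation n u y \<longleftrightarrow> (u \<le> x \<longleftrightarrow> u \<le> y) \<and> x < y \<or> u \<le> x \<and> y < u"
  using assms unfolding rotation_def by auto

lemma inj_on_rotation: "u \<le> n \<Longrightarrow> inj_on (rotation n u) {1..n}"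
  unfolding inj_on_def rotation_def by auto

lemma cshift_eq_rotation_image:
  assumes "u \<in> {1..n}" "X \<subseteq> {1..n}"
  shows "cshift n (1 - int u) X = rotation n u ` X"
proof -
  have "nat ((int x + (1 - int u) - 1) mod int n) + 1 = rotation n u x" if "x \<in> {1..n}" for x
  proof (cases "u \<le> x")
    case True
    have "(int x + (1 - int u) - 1) mod int n = (int x - int u) mod int n" by simp
    also have "\<dots> = int x - int u" using True that assms(1) by (intro mod_pos_pos_trivial) auto
    finally show ?thesis using True unfolding rotation_def by simp
  next
    case False
    have "(int x + (1 - int u) - 1) mod int n = (int x - int u + int n) mod int n" by simp
    also have "\<dots> = int x - int u + int n"
      using False that assms(1) by (intro mod_pos_pos_trivial) auto
    finally show ?thesis using False assms(1) unfolding rotation_def by simp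
  qed
  then show ?thesis unfolding cshift_def using assms(2) by (intro image_cong) auto
qed

lemma adjacent_pair_rotation:
  assumes IJ: "I \<subseteq> {1..n}" "J \<subseteq> {1..n}" and u: "u \<in> {1..n}" "u \<le> j \<or> i < u"
    and adj: "adjacent_pair I J j i"
  shows "adjacent_pair (rotation n u ` I) (rotation n u ` J) (rotation n u j) (rotation n u i)"
proof -
  let ?r = "rotation n u"
  have ji: "j \<in> J - I" "i \<in> I - J" "j < i" and agree: "\<And>z. j < z \<Longrightarrow> z < i \<Longrightarrow> z \<in> I \<longleftrightarrow> z \<in> J"
    using adj unfolding adjacent_pair_def by auto
  have range: "j \<in> {1..n}" "i \<in> {1..n}" using ji IJ by auto
  have inj: "inj_on ?r {1..n}" using inj_on_rotation u by simp
  have between: "j < x \<and> x < i" if "x \<in> {1..n}" "?r j < ?r x" "?r x < ?r i" for x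
    using that rotation_less_iff[of j n x u] rotation_less_iff[of x n i u] range u ji(3) by auto
  have "?r j < ?r i" using rotation_less_iff[of j n i u] range u ji(3) by auto
  moreover have "?r j \<in> ?r ` J - ?r ` I" "?r i \<in> ?r ` I - ?r ` J"
    using ji range inj_on_image_mem_iff[OF inj, of j I] inj_on_image_mem_iff[OF inj, of i J] IJ
    by auto
  moreover have "y \<in> ?r ` I \<longleftrightarrow> y \<in> ?r ` J" if "?r j < y" "y < ?r i" for y
  proof -
    have "x \<in> I \<longleftrightarrow> x \<in> J" if "x \<in> I \<union> J" "y = ?r x" for x
      using agree between[of x] that \<open>?r j < y\<close> \<open>y < ?r i\<close> IJ by blast
    then show ?thesis by blast
  qed
  ultimately show ?thesis unfolding adjacent_pair_def by blast
qed

lemma count_below_rotation: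
  assumes S: "S \<subseteq> {1..n}" and u: "u \<in> {1..n}" and j: "j \<in> {1..n}"
  shows "int (count_below (rotation n u ` S) (rotation n u j))
    = int (count_below S j) - int (count_below S u) + (if u \<le> j then 0 else int (card S))"
proof -
  let ?r = "rotation n u"
  have fin: "finite S" using S finite_subset by blast
  have "{y \<in> ?r ` S. y < ?r j} = ?r ` {x \<in> S. ?r x < ?r j}" by blast
  moreover have "inj_on ?r {x \<in> S. ?r x < ?r j}"
    using inj_on_rotation[of u n] u S by (auto intro: inj_on_subset)
  ultimately have count: "count_below (?r ` S) (?r j) = card {x \<in> S. ?r x < ?r j}"
    unfolding count_below_def by (simp add: card_image)
  show ?thesis
  proof (cases "u \<le> j")
    case True
    have "{x \<in> S. ?r x < ?r j} = {x \<in> S. u \<le> x \<and> x < j}"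
      using rotation_less_iff[of _ n j u] S u j True by auto
    moreover have "{x \<in> S. x < j} = {x \<in> S. x < u} \<union> {x \<in> S. u \<le> x \<and> x < j}" using True by auto
    then have "count_below S j = count_below S u + card {x \<in> S. u \<le> x \<and> x < j}"
      unfolding count_below_def using fin by (simp add: card_Un_disjoint disjoint_iff)
    ultimately show ?thesis using count True by simp
  next
    case False
    have "{x \<in> S. ?r x < ?r j} = {x \<in> S. x < j} \<union> {x \<in> S. u \<le> x}"
      using rotation_less_iff[of _ n j u] S u j False by auto
    moreover have "S = {x \<in> S. x < u} \<union> {x \<in> S. u \<le> x}" by auto
    then have "card S = count_below S u + card {x \<in> S. u \<le> x}"
      unfolding count_below_def using fin by (metis (no_types, lifting) card_Un_disjoint disjoint_iff
          finite_Un mem_Collect_eq not_le)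
    moreover have "card ({x \<in> S. x < j} \<union> {x \<in> S. u \<le> x}) = count_below S j + card {x \<in> S. u \<le> x}"
      unfolding count_below_def using fin False by (simp add: card_Un_disjoint disjoint_iff)
    ultimately show ?thesis using count False by simp
  qed
qed

definition excess :: "nat set \<Rightarrow> nat set \<Rightarrow> nat \<Rightarrow> int" where
  "excess I J t = int (count_below I t) - int (count_below J t)"

lemma excess_step:
  "finite I \<Longrightarrow> finite J \<Longrightarrow> \<bar>excess I J (Suc t) - excess I J t\<bar> \<le> 1"
  unfolding excess_def using count_below_Suc[of I t] count_below_Suc[of J t] by auto

lemma excess_Suc_adjacent_pair:
  "finite I \<Longrightarrow> finite J \<Longrightarrow> adjacent_pair I J j i \<Longrightarrow> excess I J (Suc j) = excess I J j - 1"
  unfolding excess_def adjacent_pair_def using count_below_Suc[of I j] count_below_Suc[of J j] by auto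

lemma excess_boundary:
  assumes "I \<subseteq> {1..n}" "J \<subseteq> {1..n}" "card I = card J"
  shows "excess I J 1 = 0" "excess I J (Suc n) = 0"
proof -
  have "{y \<in> I. y < 1} = {}" "{y \<in> J. y < 1} = {}" "{y \<in> I. y < Suc n} = I" "{y \<in> J. y < Suc n} = J"
    using assms by auto
  then show "excess I J 1 = 0" "excess I J (Suc n) = 0"
    unfolding excess_def count_below_def by (simp_all only: assms(3) card.empty)
qed

lemma adjacent_pair_shift_crossing:
  assumes IJ: "I \<subseteq> {1..n}" "J \<subseteq> {1..n}" and card: "card I = k" "card J = k"
    and adj: "adjacent_pair I J j i" and u: "u \<in> {1..n}" "u \<le> j \<or> i < u"
    and excess: "excess I J u = excess I J j - 1"
  shows "\<not> noncrossing k (cshift n (1 - int u) I) (cshift n (1 - int u) J)"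
proof -
  let ?r = "rotation n u"
  have fin: "finite I" "finite J" using IJ finite_subset by blast+
  have inj: "inj_on ?r I" "inj_on ?r J"
    using inj_on_rotation[of u n] u IJ by (auto intro: inj_on_subset)
  have j: "j \<in> {1..n}" using adj IJ unfolding adjacent_pair_def by auto
  have "int (count_below (?r ` I) (?r j)) = int (count_below (?r ` J) (?r j)) + 1"
    using count_below_rotation[OF IJ(1) u(1) j] count_below_rotation[OF IJ(2) u(1) j] card excess
    unfolding excess_def by simp
  then have "count_below (?r ` I) (?r j) = count_below (?r ` J) (?r j) + 1" by linarith
  then have "\<not> noncrossing k (?r ` I) (?r ` J)"
    using adjacent_pair_crossing[OF _ _ _ _ adjacent_pair_rotation[OF IJ u adj]] fin card inj
    by (simp add: card_image)
  then show ?thesis using cshift_eq_rotation_image[OF u(1)] IJ by simp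
qed

lemma interlaced_imp_shift_crossing:
  assumes IJ: "I \<subseteq> {1..n}" "J \<subseteq> {1..n}" and card: "card I = k" "card J = k"
    and "interlaced (J - I) (I - J)"
  shows "\<exists>s. \<not> noncrossing k (cshift n s I) (cshift n s J)"
proof -
  have fin: "finite I" "finite J" using IJ finite_subset by blast+
  obtain y1 x1 y2 x2 where "y1 < x1" "x1 < y2" "y2 < x2"
    and "y1 \<in> J - I" "x1 \<in> I - J" "y2 \<in> J - I" "x2 \<in> I - J"
    using assms(5) unfolding interlaced_def by blast
  then obtain j1 i1 j2 i2 where "i1 \<le> x1" "y2 \<le> j2"
    and adj1: "adjacent_pair I J j1 i1" and adj2: "adjacent_pair I J j2 i2"
    using adjacent_pair_between[OF fin] by metis
  then have order: "j1 < i1" "i1 < j2" "j2 < i2" using \<open>x1 < y2\<close> unfolding adjacent_pair_def by auto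
  have range: "j1 \<in> {1..n}" "i2 \<in> {1..n}"
    using adj1 adj2 IJ unfolding adjacent_pair_def by auto
  let ?G = "excess I J"
  have step: "\<bar>?G (Suc t) - ?G t\<bar> \<le> 1" for t using excess_step[OF fin] .
  note drop = excess_Suc_adjacent_pair[OF fin] and boundary = excess_boundary[OF IJ] card
  have crossing: "\<exists>s. \<not> noncrossing k (cshift n s I) (cshift n s J)"
    if "adjacent_pair I J j i" "u \<in> {1..n}" "u \<le> j \<or> i < u" "?G u = ?G j - 1" for j i u
    using adjacent_pair_shift_crossing[OF IJ card that] by blast
  consider "?G j1 \<le> ?G j2" | "?G j2 < ?G j1" "1 \<le> ?G j1" | "?G j2 < ?G j1" "?G j1 < 1" by linarith
  then show ?thesis
  proof cases
    case 1
    then obtain u where "Suc j1 \<le> u" "u \<le> j2" "?G u = ?G j2 - 1"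
      using nat_intermed_int_val[of "Suc j1" j2 ?G "?G j2 - 1"] step drop[OF adj1] order by auto
    then show ?thesis using crossing[OF adj2, of u] range order by auto
  next
    case 2
    then obtain u where "1 \<le> u" "u \<le> j1" "?G u = ?G j1 - 1"
      using nat_intermed_int_val[of 1 j1 ?G "?G j1 - 1"] step boundary range by auto
    then show ?thesis using crossing[OF adj1, of u] range by auto
  next
    case 3
    then obtain u where "Suc j2 \<le> u" "u \<le> Suc n" "?G u = ?G j1 - 1"
      using nat_intermed_int_val[of "Suc j2" "Suc n" ?G "?G j1 - 1"] step drop[OF adj2]
        boundary order range by auto
    moreover have "u \<noteq> Suc n" using 3 \<open>?G u = ?G j1 - 1\<close> boundary by auto
    ultimately show ?thesis using crossing[OF adj1, of u] order by auto
  qed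
qed

lemma noncrossing_shifts_imp_weakly_separated:
  assumes "I \<in> Vkn k n" "J \<in> Vkn k n" "\<And>s. noncrossing k (cshift n s I) (cshift n s J)"
  shows "weakly_separated n I J"
  using assms interlaced_imp_shift_crossing[of I n J k] interlaced_imp_shift_crossing[of J n I k]
    weakly_separated_iff_not_interlaced[of I n J] noncrossing_commute
  unfolding Vkn_def by auto

section \<open>Cyclic shifts\<close>

definition cyclic_shift :: "nat \<Rightarrow> int \<Rightarrow> nat \<Rightarrow> nat" where
  "cyclic_shift n s x = nat ((int x + s - 1) mod int n) + 1"

lemma cshift_eq_image: "cshift n s X = cyclic_shift n s ` X"
  unfolding cshift_def cyclic_shift_def ..

lemma cyclic_shift_mod_cong:
  assumes "s mod int n = s' mod int n"
  shows "cyclic_shift n s = cyclic_shift n s'"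
proof
  fix x
  have "(int x - 1 + s) mod int n = (int x - 1 + s') mod int n"
    using assms by (metis mod_add_right_eq)
  then show "cyclic_shift n s x = cyclic_shift n s' x"
    unfolding cyclic_shift_def by (simp add: algebra_simps)
qed

lemma cyclic_shift_add:
  assumes "n > 0"
  shows "cyclic_shift n s (cyclic_shift n t x) = cyclic_shift n (s + t) x"
proof -
  have "(int (cyclic_shift n t x) + s - 1) mod int n = (s + (int x + t - 1) mod int n) mod int n"
    unfolding cyclic_shift_def using assms by (simp add: algebra_simps)
  also have "\<dots> = (int x + (s + t) - 1) mod int n"
    unfolding mod_add_right_eq by (simp add: algebra_simps)
  finally show ?thesis unfolding cyclic_shift_def[of n s] by (simp add: cyclic_shift_def)
qed

lemma cyclic_shift_zero: "x \<in> {1..n} \<Longrightarrow> cyclic_shift n 0 x = x"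
  unfolding cyclic_shift_def by (simp add: nat_diff_distrib')

lemma cyclic_shift_range: "n > 0 \<Longrightarrow> cyclic_shift n s x \<in> {1..n}"
  unfolding cyclic_shift_def using pos_mod_bound[of "int n" "int x + s - 1"] pos_mod_sign[of "int n" "int x + s - 1"]
  by (simp add: Suc_le_eq nat_less_iff)

lemma inj_on_cyclic_shift: "n > 0 \<Longrightarrow> inj_on (cyclic_shift n s) {1..n}"
  by (rule inj_on_inverseI[of _ "cyclic_shift n (- s)"]) (simp add: cyclic_shift_add cyclic_shift_zero)

lemma polyvert_cyclic_shift:
  assumes "n > 0"
  shows "polyvert n (cyclic_shift n s x) = cis (2 * pi * real_of_int s / real n) * polyvert n x"
proof -
  define w where "w = (int x + s - 1) div int n"
  have "int (cyclic_shift n s x) = (int x + s - 1) mod int n + 1"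
    unfolding cyclic_shift_def using pos_mod_sign[of "int n" "int x + s - 1"] assms by simp
  also have "(int x + s - 1) mod int n = int x + s - 1 - w * int n"
    using mod_div_mult_eq[of "int x + s - 1" "int n"] unfolding w_def by linarith
  finally have "int (cyclic_shift n s x) = int x + s - w * int n" by simp
  then have real_shift: "real (cyclic_shift n s x) = real x + real_of_int s - real_of_int w * real n"
    by (metis of_int_diff of_int_add of_int_mult of_int_of_nat_eq)
  have "2 * pi * real (cyclic_shift n s x) / real n
      = 2 * pi * real_of_int s / real n + 2 * pi * real x / real n + 2 * pi * real_of_int (- w)"
    unfolding real_shift using assms by (simp add: field_simps)
  then have "polyvert n (cyclic_shift n s x)
      = cis (2 * pi * real_of_int s / real n) * cis (2 * pi * real x / real n)
          * cis (2 * pi * real_of_int (- w))"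
    unfolding polyvert_def by (simp only: cis_mult)
  also have "cis (2 * pi * real_of_int (- w)) = 1" by (rule cis_multiple_2pi) simp
  finally show ?thesis unfolding polyvert_def by simp
qed

lemma weakly_separated_cshift_iff:
  assumes "n > 0" "I \<subseteq> {1..n}" "J \<subseteq> {1..n}"
  shows "weakly_separated n (cshift n s I) (cshift n s J) \<longleftrightarrow> weakly_separated n I J"
proof -
  define f where "f z = cis (2 * pi * real_of_int s / real n) * z" for z
  have "linear f" "inj f" unfolding f_def by (auto intro: injI)
  have "cshift n s X - cshift n s Y = cyclic_shift n s ` (X - Y)" if "X \<subseteq> {1..n}" "Y \<subseteq> {1..n}" for X Y
    unfolding cshift_eq_image
    by (rule inj_on_image_set_diff[OF inj_on_cyclic_shift[OF assms(1)], symmetric]) (use that in auto)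
  moreover have "convex hull (polyvert n ` cyclic_shift n s ` X) = f ` (convex hull (polyvert n ` X))" for X
    unfolding image_image f_def polyvert_cyclic_shift[OF assms(1)]
    using convex_hull_linear_image[OF \<open>linear f\<close>] by (simp add: image_image f_def)
  ultimately show ?thesis
    unfolding weakly_separated_def using assms image_Int[OF \<open>inj f\<close>] by (metis image_is_empty)
qed

lemma cshift_Vkn:
  assumes "n > 0" "X \<in> Vkn k n"
  shows "cshift n s X \<in> Vkn k n"
proof -
  have "inj_on (cyclic_shift n s) X"
    using inj_on_cyclic_shift[OF assms(1)] assms(2) unfolding Vkn_def by (auto intro: inj_on_subset)
  then show ?thesis
    using assms cyclic_shift_range unfolding Vkn_def cshift_eq_image by (auto simp: card_image)
qed

lemma cshift_cshift: "n > 0 \<Longrightarrow> cshift n s (cshift n t X) = cshift n (s + t) X"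
  unfolding cshift_eq_image image_image using cyclic_shift_add by simp

lemma cshift_zero: "X \<subseteq> {1..n} \<Longrightarrow> cshift n 0 X = X"
  unfolding cshift_eq_image using cyclic_shift_zero by (simp add: subset_iff)

lemma cshift_inverse: "n > 0 \<Longrightarrow> X \<subseteq> {1..n} \<Longrightarrow> cshift n s (cshift n (- s) X) = X"
  by (simp add: cshift_cshift cshift_zero)

lemma cshift_representatives:
  assumes "n > 0"
  obtains r r' where "r \<in> {1..n}" "cshift n s = cshift n (int r)"
    and "r' \<in> {1..n}" "cshift n s = cshift n (- int r')"
proof -
  have rep: "\<exists>r\<in>{1..n}. t mod int n = int r mod int n" for t
  proof (cases "t mod int n = 0")
    case False
    moreover have "0 \<le> t mod int n" "t mod int n < int n" using assms by simp_all
    ultimately show ?thesis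
      by (intro bexI[of _ "nat (t mod int n)"]) (simp_all add: Suc_le_eq nat_le_iff)
  qed (use assms in \<open>auto intro!: bexI[of _ n]\<close>)
  obtain r where "r \<in> {1..n}" "s mod int n = int r mod int n" using rep by blast
  moreover obtain r' where "r' \<in> {1..n}" "(- s) mod int n = int r' mod int n" using rep by blast
  moreover from this(2) have "s mod int n = (- int r') mod int n"
    using mod_minus_cong[of "- s" "int n" "int r'"] by simp
  ultimately show ?thesis using that cyclic_shift_mod_cong unfolding cshift_eq_image by metis
qed

lemma all_cshift_iff_representatives:
  assumes "n > 0"
  shows "(\<forall>s. P (cshift n s)) \<longleftrightarrow> (\<forall>r\<in>{1..n}. P (cshift n (int r)))"
    and "(\<forall>s. P (cshift n s)) \<longleftrightarrow> (\<forall>r\<in>{1..n}. P (cshift n (- int r)))"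
proof -
  have "P (cshift n s)" if "\<forall>r\<in>{1..n}. P (cshift n (int r))" for s
    using cshift_representatives[OF assms, of s] that by metis
  moreover have "P (cshift n s)" if "\<forall>r\<in>{1..n}. P (cshift n (- int r))" for s
    using cshift_representatives[OF assms, of s] that by metis
  ultimately show "(\<forall>s. P (cshift n s)) \<longleftrightarrow> (\<forall>r\<in>{1..n}. P (cshift n (int r)))"
    "(\<forall>s. P (cshift n s)) \<longleftrightarrow> (\<forall>r\<in>{1..n}. P (cshift n (- int r)))" by blast+
qed

lemma shift_complex_DeltaNC_iff:
  assumes "n > 0"
  shows "F \<in> shift_complex n s (DeltaNC k n) \<longleftrightarrow>
    F \<subseteq> Vkn k n \<and> (\<forall>I\<in>F. \<forall>J\<in>F. noncrossing k (cshift n (- s) I) (cshift n (- s) J))"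
proof
  assume "F \<in> shift_complex n s (DeltaNC k n)"
  then obtain G where G: "G \<subseteq> Vkn k n" "\<forall>I\<in>G. \<forall>J\<in>G. noncrossing k I J" "F = cshift n s ` G"
    unfolding shift_complex_def DeltaNC_def by blast
  have unshift: "cshift n (- s) (cshift n s X) = X" if "X \<in> G" for X
    using cshift_inverse[OF assms, of X "- s"] that G(1) by (auto simp: Vkn_def)
  have "F \<subseteq> Vkn k n" using G(1,3) cshift_Vkn[OF assms] by blast
  moreover have "\<forall>I\<in>F. \<forall>J\<in>F. noncrossing k (cshift n (- s) I) (cshift n (- s) J)"
    using G(2) unfolding G(3) by (simp add: unshift)
  ultimately show "F \<subseteq> Vkn k n \<and> (\<forall>I\<in>F. \<forall>J\<in>F. noncrossing k (cshift n (- s) I) (cshift n (- s) J))" ..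
next
  assume F: "F \<subseteq> Vkn k n \<and> (\<forall>I\<in>F. \<forall>J\<in>F. noncrossing k (cshift n (- s) I) (cshift n (- s) J))"
  have "cshift n s (cshift n (- s) X) = X" if "X \<in> F" for X
    using cshift_inverse[OF assms] that F by (auto simp: Vkn_def)
  then have "cshift n s ` cshift n (- s) ` F = F"
    unfolding image_image by simp
  moreover have "cshift n (- s) ` F \<in> DeltaNC k n"
    using F cshift_Vkn[OF assms] unfolding DeltaNC_def by auto
  ultimately show "F \<in> shift_complex n s (DeltaNC k n)"
    unfolding shift_complex_def by (metis image_eqI)
qed

lemma weakly_separated_iff_noncrossing_shifts:
  assumes "n > 0" "I \<in> Vkn k n" "J \<in> Vkn k n"
  shows "weakly_separated n I J \<longleftrightarrow> (\<forall>s. noncrossing k (cshift n s I) (cshift n s J))"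
proof
  assume "weakly_separated n I J"
  then have "weakly_separated n (cshift n s I) (cshift n s J)" for s
    using weakly_separated_cshift_iff assms by (simp add: Vkn_def)
  then show "\<forall>s. noncrossing k (cshift n s I) (cshift n s J)"
    using weakly_separated_imp_noncrossing cshift_Vkn assms by blast
qed (use noncrossing_shifts_imp_weakly_separated assms in blast)

lemma DeltaSep_eq_Inter_shift_complex:
  assumes "n > 0"
  shows "DeltaSep k n = (\<Inter>i\<in>{1..n}. shift_complex n (int i) (DeltaNC k n))"
proof -
  have ws: "weakly_separated n I J \<longleftrightarrow>
      (\<forall>i\<in>{1..n}. noncrossing k (cshift n (- int i) I) (cshift n (- int i) J))"
    if "I \<in> Vkn k n" "J \<in> Vkn k n" for I J
    using weakly_separated_iff_noncrossing_shifts[OF assms that]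
      all_cshift_iff_representatives(2)[OF assms, of "\<lambda>f. noncrossing k (f I) (f J)"] by simp
  have "F \<in> DeltaSep k n \<longleftrightarrow> F \<subseteq> Vkn k n \<and>
      (\<forall>i\<in>{1..n}. \<forall>I\<in>F. \<forall>J\<in>F. noncrossing k (cshift n (- int i) I) (cshift n (- int i) J))" for F
    unfolding DeltaSep_def using ws by blast
  moreover have "{1..n} \<noteq> {}" using assms by simp
  ultimately show ?thesis
    unfolding set_eq_iff by (simp add: shift_complex_DeltaNC_iff[OF assms] ball_conj_distrib)
qed

theorem proposition5p2:
  fixes k n :: nat
  assumes "1 \<le> k" and "k \<le> n - 1"
  shows "(\<forall>I\<in>Vkn k n. \<forall>J\<in>Vkn k n. weakly_separated n I J \<longrightarrow> noncrossing k I J)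
    \<and> (\<forall>I\<in>Vkn k n. \<forall>J\<in>Vkn k n.
          (\<forall>i\<in>{1..n}. noncrossing k (cshift n (int i) I) (cshift n (int i) J))
          \<longrightarrow> weakly_separated n I J)
    \<and> DeltaSep k n = (\<Inter>i\<in>{1..n}. shift_complex n (int i) (DeltaNC k n))"
proof (intro conjI ballI impI)
  have n: "n > 0" using assms by simp
  show "noncrossing k I J" if "I \<in> Vkn k n" "J \<in> Vkn k n" "weakly_separated n I J" for I J
    using weakly_separated_imp_noncrossing that .
  show "weakly_separated n I J"
    if "I \<in> Vkn k n" "J \<in> Vkn k n" "\<forall>i\<in>{1..n}. noncrossing k (cshift n (int i) I) (cshift n (int i) J)"
    for I J
    using noncrossing_shifts_imp_weakly_separated[OF that(1,2)] that(3)
      all_cshift_iff_representatives(1)[OF n, of "\<lambda>f. noncrossing k (f I) (f J)"] by simp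
  show "DeltaSep k n = (\<Inter>i\<in>{1..n}. shift_complex n (int i) (DeltaNC k n))"
    using DeltaSep_eq_Inter_shift_complex[OF n] .
qed

end
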